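(* For given cardinality vectors $\boldsymbol\varrho,\boldsymbol\varphi,\boldsymbol\psi$, the expected number of edges of the primary IDNC graph is \[ \mathbb E\big[|\mathcal E_\rho|\big]=\frac12\sum_{i=1}^M\psi_i\Bigg\{\sum_{k=1,k\ne i}^M\frac{\psi_k}{N}\Big(1+\frac{\varrho_k\varrho_i}{N-1}\Big)\Bigg\}. \]
   Context: A sender holds a frame $\mathcal N$ of $N\ge2$ packets and serves receivers $\mathcal M=\{1,\dots,M\}$. For each receiver $i$ there are sets $\mathcal H_i\subseteq\mathcal N$ (Has set), $\mathcal L_i=\mathcal N\setminus\mathcal H_i$ (Lacks set) and $\mathcal W_i\subseteq\mathcal L_i$ (Wants set), with cardinalities $\varrho_i=|\mathcal H_i|$, $\varphi_i=N-\varrho_i$, $\psi_i=|\mathcal W_i|$. The primary IDNC graph $\mathcal G_\rho$ has a vertex $v_{ij}$ for every receiver $i$ and every $j\in\mathcal W_i$; two distinct vertices $v_{ij},v_{kl}$ are adjacent iff (C1) $j=l$, or (C2) $j\in\mathcal H_k$ and $l\in\mathcal H_i$. $\mathcal E_\rho$ is its edge set. Expectations are taken in the model that ignores set contents: given the cardinalities, the pairs $(\mathcal H_k,\mathcal W_k)$, $k\in\mathcal M$, are independent, $\mathcal H_k$ is a uniformly random $\varrho_k$-element subset of $\mathcal N$, and given $\mathcal H_k$, $\mathcal W_k$ is a uniformly random $\psi_k$-element subset of $\mathcal N\setminus\mathcal H_k$. *)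

theory Defs
  imports "HOL-Probability.Probability"
begin

text \<open>Packets are \<open>{1..N}\<close>, receivers are \<open>{1..M}\<close>.
  A configuration assigns to each receiver k its pair (Has set, Wants set).\<close>

definition idnc_vertices :: "nat \<Rightarrow> (nat \<Rightarrow> nat set) \<Rightarrow> (nat \<times> nat) set" where
  "idnc_vertices M W = {(i, j). i \<in> {1..M} \<and> j \<in> W i}"

definition idnc_adj :: "(nat \<Rightarrow> nat set) \<Rightarrow> nat \<times> nat \<Rightarrow> nat \<times> nat \<Rightarrow> bool" where
  "idnc_adj H v w = (case v of (i, j) \<Rightarrow> case w of (k, l) \<Rightarrow>
      j = l \<or> (j \<in> H k \<and> l \<in> H i))"

definition idnc_edges :: "nat \<Rightarrow> (nat \<Rightarrow> nat set) \<Rightarrow> (nat \<Rightarrow> nat set) \<Rightarrow> (nat \<times> nat) set set" where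
  "idnc_edges M H W = {{v, w} | v w. v \<in> idnc_vertices M W \<and> w \<in> idnc_vertices M W
      \<and> v \<noteq> w \<and> idnc_adj H v w}"

definition receiver_pmf :: "nat \<Rightarrow> nat \<Rightarrow> nat \<Rightarrow> (nat set \<times> nat set) pmf" where
  "receiver_pmf N \<rho> \<psi> =
     do { H \<leftarrow> pmf_of_set {H. H \<subseteq> {1..N} \<and> card H = \<rho>};
          W \<leftarrow> pmf_of_set {W. W \<subseteq> {1..N} - H \<and> card W = \<psi>};
          return_pmf (H, W) }"

definition config_pmf :: "nat \<Rightarrow> nat \<Rightarrow> (nat \<Rightarrow> nat) \<Rightarrow> (nat \<Rightarrow> nat)
    \<Rightarrow> (nat \<Rightarrow> nat set \<times> nat set) pmf" where
  "config_pmf N M \<rho> \<psi> = Pi_pmf {1..M} ({}, {}) (\<lambda>k. receiver_pmf N (\<rho> k) (\<psi> k))"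

end

theory Submission
  imports Defs
begin

text \<open>Twice the number of edges is the number of ordered pairs of adjacent vertices. Two
  vertices of the same receiver are never adjacent, since a receiver does not have what it
  wants; for receivers \<open>i \<noteq> k\<close> the adjacent pairs \<open>((i,j),(k,l))\<close> are those with
  \<open>j = l \<in> W\<^sub>i \<inter> W\<^sub>k\<close> (C1) and those with \<open>j \<in> W\<^sub>i \<inter> H\<^sub>k\<close>, \<open>l \<in> W\<^sub>k \<inter> H\<^sub>i\<close> (C2), and
  the two kinds exclude each other. Receivers are independent, so every such indicator has
  expectation a product of single-receiver probabilities, \<open>P(j \<in> W\<^sub>i) = \<psi>\<^sub>i/N\<close> and, for
  \<open>j \<noteq> l\<close>, \<open>P(j \<in> W\<^sub>i \<and> l \<in> H\<^sub>i) = \<rho>\<^sub>i\<psi>\<^sub>i/(N(N-1))\<close>; these follow by counting subsets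
  that avoid one or two given packets. Summing over the \<open>N\<close> packets and the \<open>N(N-1)\<close>
  ordered pairs of distinct packets gives the formula.\<close>

section \<open>Uniformly random subsets of a given size\<close>

definition subsets_of_size :: "'a set \<Rightarrow> nat \<Rightarrow> 'a set set" where
  "subsets_of_size A k = {X. X \<subseteq> A \<and> card X = k}"

lemma finite_subsets_of_size: "finite A \<Longrightarrow> finite (subsets_of_size A k)"
  unfolding subsets_of_size_def by (rule finite_subset[of _ "Pow A"]) auto

lemma card_subsets_of_size: "finite A \<Longrightarrow> card (subsets_of_size A k) = card A choose k"
  unfolding subsets_of_size_def by (rule n_subsets)

lemma subsets_of_size_nonempty: "finite A \<Longrightarrow> k \<le> card A \<Longrightarrow> subsets_of_size A k \<noteq> {}"
  using card_subsets_of_size[of A k] by fastforce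

lemma expectation_pmf_of_subsets_of_size:
  fixes f :: "'a set \<Rightarrow> real"
  assumes "finite A" "k \<le> card A"
  shows "measure_pmf.expectation (pmf_of_set (subsets_of_size A k)) f
           = (\<Sum>X\<in>subsets_of_size A k. f X) / real (card A choose k)"
  using assms
  by (simp add: integral_pmf_of_set finite_subsets_of_size subsets_of_size_nonempty card_subsets_of_size)

lemma expectation_pmf_of_subsets_of_size_disjoint:
  assumes "finite A" "k \<le> card A" "B \<subseteq> A"
  shows "measure_pmf.expectation (pmf_of_set (subsets_of_size A k)) (\<lambda>X. of_bool (B \<inter> X = {}))
           = real ((card A - card B) choose k) / real (card A choose k)"
proof -
  have "{X \<in> subsets_of_size A k. B \<inter> X = {}} = subsets_of_size (A - B) k"
    unfolding subsets_of_size_def by auto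
  then have "(\<Sum>X\<in>subsets_of_size A k. of_bool (B \<inter> X = {}) :: real)
               = real ((card A - card B) choose k)"
    using assms by (simp add: sum.If_cases finite_subsets_of_size card_subsets_of_size
                              card_Diff_subset finite_subset Int_def)
  then show ?thesis
    using assms by (simp add: expectation_pmf_of_subsets_of_size)
qed

lemma expectation_pmf_of_subsets_of_size_notin:
  assumes "finite A" "k \<le> card A" "j \<in> A"
  shows "measure_pmf.expectation (pmf_of_set (subsets_of_size A k)) (\<lambda>X. of_bool (j \<notin> X))
           = real (card A - k) / real (card A)"
proof -
  let ?m = "card A"
  have "?m > 0" "(?m choose k) > 0"
    using assms card_gt_0_iff by auto
  moreover have "real (?m - k) * real (?m choose k) = real ?m * real ((?m - 1) choose k)"
    by (metis binomial_absorb_comp of_nat_mult)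
  ultimately have "real ((?m - 1) choose k) / real (?m choose k) = real (?m - k) / real ?m"
    by (simp add: field_simps)
  then show ?thesis
    using expectation_pmf_of_subsets_of_size_disjoint[OF assms(1,2), of "{j}"] assms by simp
qed

lemma expectation_pmf_of_subsets_of_size_in:
  assumes "finite A" "k \<le> card A"
  shows "measure_pmf.expectation (pmf_of_set (subsets_of_size A k)) (\<lambda>X. of_bool (j \<in> X))
           = (if j \<in> A then real k / real (card A) else 0)"
proof (cases "j \<in> A")
  case True
  let ?E = "measure_pmf.expectation (pmf_of_set (subsets_of_size A k))"
  have "?E (\<lambda>X. of_bool (j \<in> X)) = ?E (\<lambda>X. 1 - of_bool (j \<notin> X))"
    by (intro Bochner_Integration.integral_cong) auto
  also have "\<dots> = 1 - real (card A - k) / real (card A)"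
    using assms True expectation_pmf_of_subsets_of_size_notin[OF assms True]
    by (simp add: Bochner_Integration.integral_diff finite_subsets_of_size
                  subsets_of_size_nonempty integrable_measure_pmf_finite)
  also have "\<dots> = real k / real (card A)"
    using assms True by (auto simp: divide_simps)
  finally show ?thesis
    using True by simp
next
  case False
  then have "\<forall>X\<in>subsets_of_size A k. j \<notin> X"
    unfolding subsets_of_size_def by auto
  then show ?thesis
    using False assms by (simp add: expectation_pmf_of_subsets_of_size)
qed

lemma expectation_pmf_of_subsets_of_size_in_notin:
  assumes "finite A" "k \<le> card A" "j \<in> A" "l \<in> A" "j \<noteq> l"
  shows "measure_pmf.expectation (pmf_of_set (subsets_of_size A k)) (\<lambda>X. of_bool (l \<in> X \<and> j \<notin> X))
           = real k * real (card A - k) / (real (card A) * (real (card A) - 1))"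
proof -
  let ?m = "card A"
  let ?E = "measure_pmf.expectation (pmf_of_set (subsets_of_size A k))"
  have m: "?m \<ge> 2"
    using assms by (metis card_2_iff card_mono empty_subsetI insert_subset)
  have "(?m - 1 - k) * (?m - k) * (?m choose k) = ?m * (?m - 1) * ((?m - 2) choose k)"
    using binomial_absorb_comp[of ?m k] binomial_absorb_comp[of "?m - 1" k]
    by (metis diff_diff_left mult.assoc mult.left_commute one_add_one)
  then have "real (?m - 1 - k) * real (?m - k) * real (?m choose k)
               = real ?m * real (?m - 1) * real ((?m - 2) choose k)"
    by (metis of_nat_mult)
  then have "real ((?m - 2) choose k) / real (?m choose k)
               = real (?m - k) * real (?m - 1 - k) / (real ?m * (real ?m - 1))"
    using m assms(2) by (simp add: field_simps)
  then have disj: "?E (\<lambda>X. of_bool ({j, l} \<inter> X = {}))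
               = real (?m - k) * real (?m - 1 - k) / (real ?m * (real ?m - 1))"
    using expectation_pmf_of_subsets_of_size_disjoint[OF assms(1,2), of "{j, l}"] assms
    by (simp add: numeral_2_eq_2)
  have "?E (\<lambda>X. of_bool (l \<in> X \<and> j \<notin> X))
          = ?E (\<lambda>X. of_bool (j \<notin> X) - of_bool ({j, l} \<inter> X = {}))"
    by (intro Bochner_Integration.integral_cong) auto
  also have "\<dots> = real (?m - k) / real ?m - real (?m - k) * real (?m - 1 - k) / (real ?m * (real ?m - 1))"
    using assms disj expectation_pmf_of_subsets_of_size_notin[OF assms(1-3)]
    by (simp add: Bochner_Integration.integral_diff finite_subsets_of_size
                  subsets_of_size_nonempty integrable_measure_pmf_finite)
  also have "\<dots> = real k * real (?m - k) / (real ?m * (real ?m - 1))"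
    using m assms(2) by (cases "k = ?m") (auto simp: field_simps)
  finally show ?thesis .
qed

section \<open>A single receiver\<close>

lemma receiver_pmf_conv_bind:
  "receiver_pmf N r p = pmf_of_set (subsets_of_size {1..N} r) \<bind>
     (\<lambda>H. map_pmf (Pair H) (pmf_of_set (subsets_of_size ({1..N} - H) p)))"
  unfolding receiver_pmf_def subsets_of_size_def map_pmf_def by simp

lemma card_lacks:
  "H \<in> subsets_of_size {1..N} r \<Longrightarrow> card ({1..N} - H) = N - r"
  unfolding subsets_of_size_def by (auto simp: card_Diff_subset finite_subset)

lemma set_pmf_receiver_pmf:
  assumes "r \<le> N" "p \<le> N - r"
  shows "set_pmf (receiver_pmf N r p)
           = (SIGMA H:subsets_of_size {1..N} r. subsets_of_size ({1..N} - H) p)"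
  using assms card_lacks[of _ N r] subsets_of_size_nonempty[of "{1..N}" r]
        subsets_of_size_nonempty[of "{1..N} - _" p]
  by (auto simp: receiver_pmf_conv_bind finite_subsets_of_size)

lemma finite_set_pmf_receiver_pmf:
  assumes "r \<le> N" "p \<le> N - r"
  shows "finite (set_pmf (receiver_pmf N r p))"
  unfolding set_pmf_receiver_pmf[OF assms] by (auto intro!: finite_SigmaI finite_subsets_of_size)

lemma wants_subset_lacks_receiver_pmf:
  assumes "r \<le> N" "p \<le> N - r" "x \<in> set_pmf (receiver_pmf N r p)"
  shows "snd x \<subseteq> {1..N} - fst x"
  using assms unfolding set_pmf_receiver_pmf[OF assms(1,2)] subsets_of_size_def by auto

lemma expectation_receiver_pmf:
  fixes h :: "nat set \<times> nat set \<Rightarrow> real"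
  assumes "r \<le> N" "p \<le> N - r"
  shows "measure_pmf.expectation (receiver_pmf N r p) h =
     measure_pmf.expectation (pmf_of_set (subsets_of_size {1..N} r))
       (\<lambda>H. measure_pmf.expectation (pmf_of_set (subsets_of_size ({1..N} - H) p)) (\<lambda>W. h (H, W)))"
  using assms card_lacks[of _ N r] subsets_of_size_nonempty[of "{1..N}" r]
        subsets_of_size_nonempty[of "{1..N} - _" p]
  by (simp add: receiver_pmf_conv_bind pmf_expectation_bind_pmf_of_set integral_pmf_of_set
                finite_subsets_of_size sum_divide_distrib sum_distrib_left divide_inverse_commute)

lemma expectation_receiver_pmf_weighted_wants:
  fixes g :: "nat set \<Rightarrow> real"
  assumes "r \<le> N" "p \<le> N - r" "j \<in> {1..N}"
  shows "measure_pmf.expectation (receiver_pmf N r p) (\<lambda>(H, W). g H * of_bool (j \<in> W))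
           = real p / real (N - r) *
             measure_pmf.expectation (pmf_of_set (subsets_of_size {1..N} r)) (\<lambda>H. g H * of_bool (j \<notin> H))"
proof -
  let ?S = "pmf_of_set (subsets_of_size {1..N} r)"
  have inner: "measure_pmf.expectation (pmf_of_set (subsets_of_size ({1..N} - H) p))
                 (\<lambda>W. g H * of_bool (j \<in> W)) = real p / real (N - r) * (g H * of_bool (j \<notin> H))"
    if "H \<in> set_pmf ?S" for H
  proof -
    have "H \<in> subsets_of_size {1..N} r"
      using that assms subsets_of_size_nonempty[of "{1..N}" r]
      by (simp add: finite_subsets_of_size)
    then show ?thesis
      using assms card_lacks[of H N r]
      by (simp add: expectation_pmf_of_subsets_of_size_in)
  qed
  show ?thesis
    unfolding expectation_receiver_pmf[OF assms(1,2)] integral_mult_right_zero[symmetric]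
    using inner by (intro integral_cong_AE) (simp_all add: AE_measure_pmf_iff)
qed

lemma expectation_receiver_pmf_wants:
  assumes "r \<le> N" "p \<le> N - r" "j \<in> {1..N}"
  shows "measure_pmf.expectation (receiver_pmf N r p) (\<lambda>x. of_bool (j \<in> snd x)) = real p / real N"
proof -
  have "measure_pmf.expectation (receiver_pmf N r p) (\<lambda>x. of_bool (j \<in> snd x))
          = measure_pmf.expectation (receiver_pmf N r p) (\<lambda>(H, W). 1 * of_bool (j \<in> W) :: real)"
    by (intro Bochner_Integration.integral_cong) auto
  also have "\<dots> = real p / real (N - r) *
      measure_pmf.expectation (pmf_of_set (subsets_of_size {1..N} r)) (\<lambda>H. 1 * of_bool (j \<notin> H))"
    by (rule expectation_receiver_pmf_weighted_wants[OF assms])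
  also have "\<dots> = real p / real (N - r) * (real (N - r) / real N)"
    using assms by (simp add: expectation_pmf_of_subsets_of_size_notin)
  also have "\<dots> = real p / real N"
    using assms by (cases "N - r = 0") auto
  finally show ?thesis .
qed

lemma expectation_receiver_pmf_wants_has:
  assumes "r \<le> N" "p \<le> N - r" "j \<in> {1..N}" "l \<in> {1..N}" "j \<noteq> l"
  shows "measure_pmf.expectation (receiver_pmf N r p) (\<lambda>x. of_bool (j \<in> snd x \<and> l \<in> fst x))
           = real r * real p / (real N * (real N - 1))"
proof -
  have "measure_pmf.expectation (receiver_pmf N r p) (\<lambda>x. of_bool (j \<in> snd x \<and> l \<in> fst x))
          = measure_pmf.expectation (receiver_pmf N r p) (\<lambda>(H, W). of_bool (l \<in> H) * of_bool (j \<in> W) :: real)"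
    by (intro Bochner_Integration.integral_cong) auto
  also have "\<dots> = real p / real (N - r) *
      measure_pmf.expectation (pmf_of_set (subsets_of_size {1..N} r)) (\<lambda>H. of_bool (l \<in> H \<and> j \<notin> H))"
    unfolding expectation_receiver_pmf_weighted_wants[OF assms(1-3)] of_bool_conj ..
  also have "\<dots> = real p / real (N - r) * (real r * real (N - r) / (real N * (real N - 1)))"
    using assms by (simp add: expectation_pmf_of_subsets_of_size_in_notin)
  also have "\<dots> = real r * real p / (real N * (real N - 1))"
    using assms by (cases "N - r = 0") auto
  finally show ?thesis .
qed

lemma expectation_receiver_pmf_wants_has_same:
  assumes "r \<le> N" "p \<le> N - r"
  shows "measure_pmf.expectation (receiver_pmf N r p) (\<lambda>x. of_bool (j \<in> snd x \<and> j \<in> fst x)) = 0"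
  using wants_subset_lacks_receiver_pmf[OF assms]
  by (intro integral_eq_zero_AE) (fastforce simp: AE_measure_pmf_iff)

section \<open>Independent receivers\<close>

lemma expectation_Pi_pmf_two_components:
  fixes f g :: "'b \<Rightarrow> real"
  assumes "finite A" "i \<in> A" "k \<in> A" "i \<noteq> k"
    and "finite (set_pmf (p i))" "finite (set_pmf (p k))"
    and "\<And>x. f x \<ge> 0" "\<And>x. g x \<ge> 0"
  shows "measure_pmf.expectation (Pi_pmf A dflt p) (\<lambda>c. f (c i) * g (c k))
           = measure_pmf.expectation (p i) f * measure_pmf.expectation (p k) g"
proof -
  define F where "F x = (if x = i then f else if x = k then g else (\<lambda>_. 1))" for x
  have prod_A: "(\<Prod>x\<in>A. u x) = u i * u k" if "\<forall>x\<in>A - {i, k}. u x = 1" for u :: "'a \<Rightarrow> real"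
    using assms that by (subst prod.mono_neutral_right[of A "{i, k}"]) auto
  have "measure_pmf.expectation (Pi_pmf A dflt p) (\<lambda>c. f (c i) * g (c k))
          = measure_pmf.expectation (Pi_pmf A dflt p) (\<lambda>c. \<Prod>x\<in>A. F x (c x))"
    using assms(4) by (simp add: prod_A F_def)
  also have "\<dots> = (\<Prod>x\<in>A. measure_pmf.expectation (p x) (F x))"
    using assms by (intro expectation_prod_Pi_pmf) (auto simp: F_def intro: integrable_measure_pmf_finite)
  also have "\<dots> = measure_pmf.expectation (p i) f * measure_pmf.expectation (p k) g"
    using assms(4) by (simp add: prod_A F_def)
  finally show ?thesis .
qed

lemma receiver_in_set_pmf_config_pmf:
  assumes "c \<in> set_pmf (config_pmf N M \<rho> \<psi>)" "i \<in> {1..M}"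
  shows "c i \<in> set_pmf (receiver_pmf N (\<rho> i) (\<psi> i))"
  using assms unfolding config_pmf_def set_Pi_pmf[OF finite_atLeastAtMost] PiE_dflt_def by auto

lemma finite_set_pmf_config_pmf:
  assumes "\<forall>i\<in>{1..M}. \<rho> i \<le> N" "\<forall>i\<in>{1..M}. \<psi> i \<le> N - \<rho> i"
  shows "finite (set_pmf (config_pmf N M \<rho> \<psi>))"
  unfolding config_pmf_def set_Pi_pmf[OF finite_atLeastAtMost]
  using assms by (intro finite_PiE_dflt) (auto intro: finite_set_pmf_receiver_pmf)

lemma integrable_config_pmf:
  fixes f :: "(nat \<Rightarrow> nat set \<times> nat set) \<Rightarrow> real"
  assumes "\<forall>i\<in>{1..M}. \<rho> i \<le> N" "\<forall>i\<in>{1..M}. \<psi> i \<le> N - \<rho> i"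
  shows "integrable (measure_pmf (config_pmf N M \<rho> \<psi>)) f"
  using assms by (intro integrable_measure_pmf_finite finite_set_pmf_config_pmf)

lemma expectation_config_pmf_two_receivers:
  fixes f g :: "nat set \<times> nat set \<Rightarrow> real"
  assumes "\<forall>i\<in>{1..M}. \<rho> i \<le> N" "\<forall>i\<in>{1..M}. \<psi> i \<le> N - \<rho> i"
    and "i \<in> {1..M}" "k \<in> {1..M}" "i \<noteq> k" "\<And>x. f x \<ge> 0" "\<And>x. g x \<ge> 0"
  shows "measure_pmf.expectation (config_pmf N M \<rho> \<psi>) (\<lambda>c. f (c i) * g (c k))
           = measure_pmf.expectation (receiver_pmf N (\<rho> i) (\<psi> i)) f *
             measure_pmf.expectation (receiver_pmf N (\<rho> k) (\<psi> k)) g"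
  unfolding config_pmf_def using assms
  by (intro expectation_Pi_pmf_two_components) (auto intro: finite_set_pmf_receiver_pmf)

section \<open>Counting the edges\<close>

lemma card_ordered_pairs_eq_twice_card_edges:
  assumes "finite V" "symp R"
  shows "card {(v, w). v \<in> V \<and> w \<in> V \<and> v \<noteq> w \<and> R v w}
           = 2 * card {{v, w} | v w. v \<in> V \<and> w \<in> V \<and> v \<noteq> w \<and> R v w}"
proof -
  define P where "P = {(v, w). v \<in> V \<and> w \<in> V \<and> v \<noteq> w \<and> R v w}"
  define e :: "'a \<times> 'a \<Rightarrow> 'a set" where "e = (\<lambda>(v, w). {v, w})"
  have "finite P"
    unfolding P_def by (rule finite_subset[of _ "V \<times> V"]) (use assms in auto)
  have edges: "{{v, w} | v w. v \<in> V \<and> w \<in> V \<and> v \<noteq> w \<and> R v w} = e ` P"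
    unfolding P_def e_def by auto
  have fibre: "card {q \<in> P. e q = e p} = 2" if "p \<in> P" for p
  proof -
    obtain v w where p: "p = (v, w)" "v \<noteq> w"
      using \<open>p \<in> P\<close> unfolding P_def by auto
    have "{q \<in> P. e q = e p} = {(v, w), (w, v)}"
      using \<open>p \<in> P\<close> assms(2) unfolding p P_def e_def by (auto simp: doubleton_eq_iff symp_def)
    then show ?thesis
      using p by simp
  qed
  have "card P = (\<Sum>d\<in>e ` P. card {q \<in> P. e q = d})"
    using sum.image_gen[OF \<open>finite P\<close>, of "\<lambda>_. 1::nat" e] by simp
  also have "\<dots> = (\<Sum>d\<in>e ` P. 2)"
    using fibre by (intro sum.cong) auto
  finally show ?thesis
    unfolding edges P_def by simp
qed

lemma symp_idnc_adj: "symp (idnc_adj H)"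
  unfolding symp_def idnc_adj_def by auto

lemma sum_idnc_vertices:
  fixes g :: "nat \<times> nat \<Rightarrow> real"
  assumes "\<forall>i\<in>{1..M}. W i \<subseteq> {1..N}"
  shows "(\<Sum>v\<in>idnc_vertices M W. g v) = (\<Sum>i\<in>{1..M}. \<Sum>j\<in>{1..N}. of_bool (j \<in> W i) * g (i, j))"
proof -
  have "idnc_vertices M W \<subseteq> {1..M} \<times> {1..N}"
    using assms unfolding idnc_vertices_def by auto
  then have "(\<Sum>v\<in>idnc_vertices M W. g v) = (\<Sum>v\<in>{1..M} \<times> {1..N}. of_bool (v \<in> idnc_vertices M W) * g v)"
    by (intro sum.mono_neutral_cong_right[symmetric]) auto
  also have "\<dots> = (\<Sum>i\<in>{1..M}. \<Sum>j\<in>{1..N}. of_bool (j \<in> W i) * g (i, j))"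
    unfolding sum.cartesian_product by (intro sum.cong) (auto simp: idnc_vertices_def)
  finally show ?thesis .
qed

lemma of_bool_idnc_adj_wanted:
  assumes "j \<notin> H i" "l \<notin> H k"
  shows "of_bool ((i, j) \<noteq> (k, l) \<and> idnc_adj H (i, j) (k, l))
           = of_bool (i \<noteq> k) * (of_bool (j = l) + of_bool (l \<in> H i \<and> j \<in> H k) :: real)"
  using assms by (auto simp: idnc_adj_def)

definition idnc_cross_adjacencies :: "nat \<Rightarrow> (nat \<Rightarrow> nat set) \<Rightarrow> (nat \<Rightarrow> nat set) \<Rightarrow> nat \<Rightarrow> nat \<Rightarrow> real" where
  "idnc_cross_adjacencies N H W i k =
     (\<Sum>j\<in>{1..N}. of_bool (j \<in> W i) * of_bool (j \<in> W k)) +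
     (\<Sum>j\<in>{1..N}. \<Sum>l\<in>{1..N}. of_bool (j \<in> W i \<and> l \<in> H i) * of_bool (l \<in> W k \<and> j \<in> H k))"

lemma idnc_cross_adjacencies_altdef:
  "idnc_cross_adjacencies N H W i k =
     (\<Sum>j\<in>{1..N}. \<Sum>l\<in>{1..N}. of_bool (j \<in> W i) * of_bool (l \<in> W k) *
        (of_bool (j = l) + of_bool (l \<in> H i \<and> j \<in> H k)))"
proof -
  have C1: "(\<Sum>l\<in>{1..N}. of_bool (j \<in> W i) * of_bool (l \<in> W k) * of_bool (j = l))
              = of_bool (j \<in> W i) * (of_bool (j \<in> W k) :: real)" if "j \<in> {1..N}" for j
  proof -
    have "(\<Sum>l\<in>{1..N}. of_bool (j \<in> W i) * of_bool (l \<in> W k) * of_bool (j = l))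
            = (\<Sum>l\<in>{1..N}. if l = j then of_bool (j \<in> W i) * (of_bool (j \<in> W k) :: real) else 0)"
      by (intro sum.cong) auto
    then show ?thesis
      using that by (simp only: sum.delta) simp
  qed
  have C2: "of_bool (j \<in> W i) * of_bool (l \<in> W k) * of_bool (l \<in> H i \<and> j \<in> H k)
              = of_bool (j \<in> W i \<and> l \<in> H i) * (of_bool (l \<in> W k \<and> j \<in> H k) :: real)" for j l
    by auto
  show ?thesis
    unfolding idnc_cross_adjacencies_def distrib_left sum.distrib C2
    using C1 by (intro arg_cong2[where f = "(+)"] sum.cong) simp_all
qed

lemma twice_card_idnc_edges:
  assumes "\<forall>i\<in>{1..M}. W i \<subseteq> {1..N} - H i"
  shows "2 * real (card (idnc_edges M H W))
           = (\<Sum>i\<in>{1..M}. \<Sum>k\<in>{1..M} - {i}. idnc_cross_adjacencies N H W i k)"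
proof -
  let ?V = "idnc_vertices M W"
  let ?X = "\<lambda>v w. of_bool (v \<noteq> w \<and> idnc_adj H v w) :: real"
  have WN: "\<forall>i\<in>{1..M}. W i \<subseteq> {1..N}"
    using assms by auto
  have "?V \<subseteq> {1..M} \<times> {1..N}"
    using WN unfolding idnc_vertices_def by auto
  then have "finite ?V"
    by (rule finite_subset) simp
  have "2 * real (card (idnc_edges M H W))
          = real (card {(v, w). v \<in> ?V \<and> w \<in> ?V \<and> v \<noteq> w \<and> idnc_adj H v w})"
    using card_ordered_pairs_eq_twice_card_edges[OF \<open>finite ?V\<close> symp_idnc_adj]
    unfolding idnc_edges_def by simp
  also have "\<dots> = (\<Sum>v\<in>?V. \<Sum>w\<in>?V. ?X v w)"
  proof -
    have "{(v, w). v \<in> ?V \<and> w \<in> ?V \<and> v \<noteq> w \<and> idnc_adj H v w}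
            = ?V \<times> ?V \<inter> {p. fst p \<noteq> snd p \<and> idnc_adj H (fst p) (snd p)}"
      by auto
    also have "real (card \<dots>) = (\<Sum>p\<in>?V \<times> ?V. ?X (fst p) (snd p))"
      using \<open>finite ?V\<close> by (simp only: sum_of_bool_eq finite_cartesian_product)
    also have "\<dots> = (\<Sum>v\<in>?V. \<Sum>w\<in>?V. ?X v w)"
      by (simp only: sum.cartesian_product case_prod_unfold)
    finally show ?thesis .
  qed
  also have "\<dots> = (\<Sum>i\<in>{1..M}. \<Sum>j\<in>{1..N}. \<Sum>k\<in>{1..M}. \<Sum>l\<in>{1..N}.
                      of_bool (j \<in> W i) * of_bool (l \<in> W k) * ?X (i, j) (k, l))"
    by (simp only: sum_idnc_vertices[OF WN] sum_distrib_left mult.assoc)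
  also have "\<dots> = (\<Sum>i\<in>{1..M}. \<Sum>j\<in>{1..N}. \<Sum>k\<in>{1..M}. \<Sum>l\<in>{1..N}.
                      of_bool (i \<noteq> k) * (of_bool (j \<in> W i) * of_bool (l \<in> W k) *
                        (of_bool (j = l) + of_bool (l \<in> H i \<and> j \<in> H k))))"
  proof (intro sum.cong refl)
    fix i j k l
    assume "i \<in> {1..M}" "k \<in> {1..M}"
    then show "of_bool (j \<in> W i) * of_bool (l \<in> W k) * ?X (i, j) (k, l)
                 = of_bool (i \<noteq> k) * (of_bool (j \<in> W i) * of_bool (l \<in> W k) *
                     (of_bool (j = l) + of_bool (l \<in> H i \<and> j \<in> H k)))"
    proof (cases "j \<in> W i \<and> l \<in> W k")
      case True
      then have "j \<notin> H i" "l \<notin> H k"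
        using assms \<open>i \<in> {1..M}\<close> \<open>k \<in> {1..M}\<close> by auto
      then show ?thesis
        using True by (subst of_bool_idnc_adj_wanted) simp_all
    qed auto
  qed
  also have "\<dots> = (\<Sum>i\<in>{1..M}. \<Sum>k\<in>{1..M}. of_bool (i \<noteq> k) * idnc_cross_adjacencies N H W i k)"
    unfolding idnc_cross_adjacencies_altdef sum_distrib_left by (intro sum.cong refl sum.swap)
  also have "\<dots> = (\<Sum>i\<in>{1..M}. \<Sum>k\<in>{1..M} - {i}. idnc_cross_adjacencies N H W i k)"
    by (intro sum.cong[OF refl] sum.mono_neutral_cong_right) auto
  finally show ?thesis .
qed

section \<open>The expected number of edges\<close>

lemma sum_off_diagonal_const:
  fixes d :: real
  shows "(\<Sum>j\<in>{1..N}. \<Sum>l\<in>{1..N}. of_bool (j \<noteq> l) * d) = real N * (real N - 1) * d"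
proof -
  have "(\<Sum>l\<in>{1..N}. of_bool (j \<noteq> l) * d) = (real N - 1) * d" if "j \<in> {1..N}" for j
  proof -
    have "{1..N} \<inter> {l. j \<noteq> l} = {1..N} - {j}"
      by auto
    then show ?thesis
      using that by (simp add: of_nat_diff)
  qed
  then have "(\<Sum>j\<in>{1..N}. \<Sum>l\<in>{1..N}. of_bool (j \<noteq> l) * d) = (\<Sum>j\<in>{1..N}. (real N - 1) * d)"
    by (rule sum.cong[OF refl])
  then show ?thesis
    by simp
qed

lemma expectation_idnc_cross_adjacencies:
  assumes "N \<ge> 2" "\<forall>i\<in>{1..M}. \<rho> i \<le> N" "\<forall>i\<in>{1..M}. \<psi> i \<le> N - \<rho> i"
    and "i \<in> {1..M}" "k \<in> {1..M}" "i \<noteq> k"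
  shows "measure_pmf.expectation (config_pmf N M \<rho> \<psi>)
           (\<lambda>c. idnc_cross_adjacencies N (\<lambda>k. fst (c k)) (\<lambda>k. snd (c k)) i k)
         = real (\<psi> i) * (real (\<psi> k) / real N * (1 + real (\<rho> k) * real (\<rho> i) / (real N - 1)))"
proof -
  let ?E = "measure_pmf.expectation (config_pmf N M \<rho> \<psi>)"
  have C1: "?E (\<lambda>c. of_bool (j \<in> snd (c i)) * of_bool (j \<in> snd (c k)))
              = real (\<psi> i) / real N * (real (\<psi> k) / real N)" if "j \<in> {1..N}" for j
    using assms that
    by (subst expectation_config_pmf_two_receivers) (simp_all add: expectation_receiver_pmf_wants)
  have C2: "?E (\<lambda>c. of_bool (j \<in> snd (c i) \<and> l \<in> fst (c i)) * of_bool (l \<in> snd (c k) \<and> j \<in> fst (c k)))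
              = of_bool (j \<noteq> l) * (real (\<rho> i) * real (\<psi> i) / (real N * (real N - 1)) *
                  (real (\<rho> k) * real (\<psi> k) / (real N * (real N - 1))))"
    if "j \<in> {1..N}" "l \<in> {1..N}" for j l
  proof (cases "j = l")
    case True
    then show ?thesis
      using assms
      by (subst expectation_config_pmf_two_receivers)
         (simp_all add: expectation_receiver_pmf_wants_has_same)
  next
    case False
    then show ?thesis
      using assms that
      by (subst expectation_config_pmf_two_receivers)
         (simp_all add: expectation_receiver_pmf_wants_has)
  qed
  note integrable = integrable_config_pmf[OF assms(2,3)]
  have "?E (\<lambda>c. idnc_cross_adjacencies N (\<lambda>k. fst (c k)) (\<lambda>k. snd (c k)) i k)
          = (\<Sum>j\<in>{1..N}. real (\<psi> i) / real N * (real (\<psi> k) / real N)) +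
            (\<Sum>j\<in>{1..N}. \<Sum>l\<in>{1..N}. of_bool (j \<noteq> l) *
               (real (\<rho> i) * real (\<psi> i) / (real N * (real N - 1)) *
                (real (\<rho> k) * real (\<psi> k) / (real N * (real N - 1)))))"
    unfolding idnc_cross_adjacencies_def
    by (simp only: Bochner_Integration.integral_add[OF integrable integrable]
                   Bochner_Integration.integral_sum[OF integrable])
      (intro arg_cong2[where f = "(+)"] sum.cong refl; simp add: C1 C2)
  also have "\<dots> = real (\<psi> i) * (real (\<psi> k) / real N * (1 + real (\<rho> k) * real (\<rho> i) / (real N - 1)))"
  proof -
    have "n * (a / n * (b / n)) + n * d * (ri * a / (n * d) * (rk * b / (n * d)))
            = a * (b / n * (1 + rk * ri / d))" if "n \<noteq> 0" "d \<noteq> 0" for n d a b ri rk :: real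
      using that by (simp add: field_simps)
    moreover have "real N \<noteq> 0" "real N - 1 \<noteq> 0"
      using assms(1) by auto
    ultimately show ?thesis
      unfolding sum_off_diagonal_const by simp
  qed
  finally show ?thesis .
qed

theorem theorem4:
  fixes N M :: nat and \<rho> \<psi> :: "nat \<Rightarrow> nat"
  assumes "N \<ge> 2"
    and "\<forall>i\<in>{1..M}. \<rho> i \<le> N"
    and "\<forall>i\<in>{1..M}. \<psi> i \<le> N - \<rho> i"
  shows "measure_pmf.expectation (config_pmf N M \<rho> \<psi>)
           (\<lambda>c. real (card (idnc_edges M (\<lambda>k. fst (c k)) (\<lambda>k. snd (c k)))))
         = 1/2 * (\<Sum>i=1..M. real (\<psi> i) *
              (\<Sum>k\<in>{1..M} - {i}. real (\<psi> k) / real N *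
                  (1 + real (\<rho> k) * real (\<rho> i) / (real N - 1))))"
proof -
  let ?C = "config_pmf N M \<rho> \<psi>"
  let ?X = "\<lambda>i k c. idnc_cross_adjacencies N (\<lambda>k. fst (c k)) (\<lambda>k. snd (c k)) i k"
  have edges: "real (card (idnc_edges M (\<lambda>k. fst (c k)) (\<lambda>k. snd (c k))))
                 = 1/2 * (\<Sum>i\<in>{1..M}. \<Sum>k\<in>{1..M} - {i}. ?X i k c)" if "c \<in> set_pmf ?C" for c
  proof -
    have "\<forall>i\<in>{1..M}. snd (c i) \<subseteq> {1..N} - fst (c i)"
      using assms(2,3) receiver_in_set_pmf_config_pmf[OF that] wants_subset_lacks_receiver_pmf
      by blast
    from twice_card_idnc_edges[OF this] show ?thesis
      by simp
  qed
  have "measure_pmf.expectation ?C (\<lambda>c. real (card (idnc_edges M (\<lambda>k. fst (c k)) (\<lambda>k. snd (c k)))))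
          = measure_pmf.expectation ?C (\<lambda>c. 1/2 * (\<Sum>i\<in>{1..M}. \<Sum>k\<in>{1..M} - {i}. ?X i k c))"
    using edges by (intro integral_cong_AE) (simp_all add: AE_measure_pmf_iff)
  also have "\<dots> = 1/2 * (\<Sum>i\<in>{1..M}. \<Sum>k\<in>{1..M} - {i}. measure_pmf.expectation ?C (?X i k))"
    using integrable_config_pmf[OF assms(2,3)] by (simp add: Bochner_Integration.integral_sum)
  also have "\<dots> = 1/2 * (\<Sum>i=1..M. \<Sum>k\<in>{1..M} - {i}. real (\<psi> i) * (real (\<psi> k) / real N *
                           (1 + real (\<rho> k) * real (\<rho> i) / (real N - 1))))"
    using assms by (simp add: expectation_idnc_cross_adjacencies)
  finally show ?thesis
    by (simp add: sum_distrib_left)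
qed

end
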